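(* Let $P$ be a linear process. If $P \to P'$, then there is a name $a$ such that $a\notin\mathcal{N}(P')$, $\mathcal{N}(P')\cup\{a\} = \mathcal{N}(P)$, and $\mathrm{sync}(a,P)$ holds.
   Context: Processes: $P ::= \mathbf{0} \mid \alpha.P \mid P\,|\,Q$ where $\alpha$ is a name $a$ or a co-name $\bar a$ (with $\bar{\bar a}=a$). Structural congruence $\equiv$ is the smallest congruence with $P|\mathbf{0}\equiv P$, $P|Q\equiv Q|P$, $P|(Q|R)\equiv(P|Q)|R$. Reduction $\to$ is the smallest relation with $a.P\,|\,\bar a.Q\to P\,|\,Q$, closed under parallel contexts ($P\to P'$ implies $P|R\to P'|R$ and $R|P\to R|P'$) and under $\equiv$. A process is linear if each name occurs at most once as an input $a$ and at most once as an output $\bar a$. $\mathcal{N}(P)$ is the set of names occurring in $P$ (as $a$ or $\bar a$): $\mathcal{N}(\mathbf{0})=\emptyset$, $\mathcal{N}(a.P)=\mathcal{N}(\bar a.P)=\{a\}\cup\mathcal{N}(P)$, $\mathcal{N}(P|Q)=\mathcal{N}(P)\cup\mathcal{N}(Q)$. $\mathrm{sync}(a,P)$ holds iff there exist $P_1,P_2,P_3,P_4$ with $P\equiv P_1\,|\,a.P_2$ and $P\equiv P_3\,|\,\bar a.P_4$. *)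

theory Defs
  imports Main
begin

text \<open>Prefixes: a name a (input) or a co-name (output, written bar a).\<close>
datatype 'n act = In 'n | Out 'n

fun co :: "'n act \<Rightarrow> 'n act" where
  "co (In a) = Out a"
| "co (Out a) = In a"

datatype 'n proc = Nil | Pre "'n act" "'n proc" | Par "'n proc" "'n proc"

inductive scong :: "'n proc \<Rightarrow> 'n proc \<Rightarrow> bool" (infix "\<equiv>\<^sub>s" 50) where
  sc_unit: "Par P Nil \<equiv>\<^sub>s P"
| sc_comm: "Par P Q \<equiv>\<^sub>s Par Q P"
| sc_assoc: "Par P (Par Q R) \<equiv>\<^sub>s Par (Par P Q) R"
| sc_refl: "P \<equiv>\<^sub>s P"
| sc_sym: "P \<equiv>\<^sub>s Q \<Longrightarrow> Q \<equiv>\<^sub>s P"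
| sc_trans: "P \<equiv>\<^sub>s Q \<Longrightarrow> Q \<equiv>\<^sub>s R \<Longrightarrow> P \<equiv>\<^sub>s R"
| sc_pre: "P \<equiv>\<^sub>s Q \<Longrightarrow> Pre \<alpha> P \<equiv>\<^sub>s Pre \<alpha> Q"
| sc_parL: "P \<equiv>\<^sub>s Q \<Longrightarrow> Par P R \<equiv>\<^sub>s Par Q R"
| sc_parR: "P \<equiv>\<^sub>s Q \<Longrightarrow> Par R P \<equiv>\<^sub>s Par R Q"

inductive red :: "'n proc \<Rightarrow> 'n proc \<Rightarrow> bool" (infix "\<longmapsto>" 50) where
  red_comm: "Par (Pre \<alpha> P) (Pre (co \<alpha>) Q) \<longmapsto> Par P Q"
| red_parL: "P \<longmapsto> P' \<Longrightarrow> Par P R \<longmapsto> Par P' R"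
| red_parR: "P \<longmapsto> P' \<Longrightarrow> Par R P \<longmapsto> Par R P'"
| red_struct: "P \<equiv>\<^sub>s Q \<Longrightarrow> Q \<longmapsto> Q' \<Longrightarrow> Q' \<equiv>\<^sub>s P' \<Longrightarrow> P \<longmapsto> P'"

fun occ :: "'n act \<Rightarrow> 'n proc \<Rightarrow> nat" where
  "occ \<beta> Nil = 0"
| "occ \<beta> (Pre \<alpha> P) = (if \<alpha> = \<beta> then 1 else 0) + occ \<beta> P"
| "occ \<beta> (Par P Q) = occ \<beta> P + occ \<beta> Q"

definition linear :: "'n proc \<Rightarrow> bool" where
  "linear P \<longleftrightarrow> (\<forall>a. occ (In a) P \<le> 1 \<and> occ (Out a) P \<le> 1)"

fun actname :: "'n act \<Rightarrow> 'n" where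
  "actname (In a) = a"
| "actname (Out a) = a"

fun names :: "'n proc \<Rightarrow> 'n set" where
  "names Nil = {}"
| "names (Pre \<alpha> P) = insert (actname \<alpha>) (names P)"
| "names (Par P Q) = names P \<union> names Q"

definition sync :: "'n \<Rightarrow> 'n proc \<Rightarrow> bool" where
  "sync a P \<longleftrightarrow> (\<exists>P1 P2. P \<equiv>\<^sub>s Par P1 (Pre (In a) P2)) \<and> (\<exists>P3 P4. P \<equiv>\<^sub>s Par P3 (Pre (Out a) P4))"

end

theory Submission
  imports Defs
begin

text \<open>A reduction consumes exactly one input prefix and one output prefix on a common name a,
  and the two prefixes it consumes witness sync a P. Occurrence counts are invariant under
  structural congruence, so this survives closure under \<open>\<equiv>\<^sub>s\<close>. Names are the channels
  with a positive count; by linearity the counts on a were 1 and drop to 0, so a disappears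
  while every other name is untouched.\<close>

lemma occ_scong: "P \<equiv>\<^sub>s Q \<Longrightarrow> occ \<beta> P = occ \<beta> Q"
  by (induction rule: scong.induct) auto

lemma mem_names_iff_occ: "x \<in> names P \<longleftrightarrow> 0 < occ (In x) P + occ (Out x) P"
proof (induction P)
  case (Pre \<alpha> P)
  then show ?case by (cases \<alpha>) auto
qed auto

lemma sync_scong: "sync a P \<Longrightarrow> P \<equiv>\<^sub>s Q \<Longrightarrow> sync a Q"
  unfolding sync_def by (meson scong.sc_sym scong.sc_trans)

lemma sync_ParL: "sync a P \<Longrightarrow> sync a (Par P R)"
proof -
  have "Par P R \<equiv>\<^sub>s Par (Par R P1) X" if "P \<equiv>\<^sub>s Par P1 X" for P1 X
    by (rule scong.sc_trans[OF scong.sc_comm], rule scong.sc_trans[OF scong.sc_parR[OF that]],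
        rule scong.sc_assoc)
  then show "sync a P \<Longrightarrow> sync a (Par P R)"
    unfolding sync_def by blast
qed

lemma sync_ParR: "sync a P \<Longrightarrow> sync a (Par R P)"
  by (erule sync_scong[OF sync_ParL], rule scong.sc_comm)

lemma sync_comm: "sync (actname \<alpha>) (Par (Pre \<alpha> P) (Pre (co \<alpha>) Q))"
  unfolding sync_def by (cases \<alpha>) (auto intro: scong.sc_refl scong.sc_comm)

lemma red_consumes_sync_pair:
  assumes "P \<longmapsto> P'"
  shows "\<exists>a. (\<forall>\<beta>. occ \<beta> P = occ \<beta> P' + (if actname \<beta> = a then 1 else 0)) \<and> sync a P"
  using assms
proof (induction rule: red.induct)
  case (red_comm \<alpha> P Q)
  have "occ \<beta> (Pre \<alpha> P) + occ \<beta> (Pre (co \<alpha>) Q)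
          = occ \<beta> P + occ \<beta> Q + (if actname \<beta> = actname \<alpha> then 1 else 0)" for \<beta>
    by (cases \<alpha>; cases \<beta>) auto
  then show ?case
    using sync_comm by fastforce
next
  case (red_parL P P' R)
  then show ?case using sync_ParL by fastforce
next
  case (red_parR P P' R)
  then show ?case using sync_ParR by fastforce
next
  case (red_struct P Q Q' P')
  then obtain a where "\<forall>\<beta>. occ \<beta> Q = occ \<beta> Q' + (if actname \<beta> = a then 1 else 0)"
    and "sync a Q"
    by blast
  moreover have "occ \<beta> P = occ \<beta> Q" "occ \<beta> Q' = occ \<beta> P'" for \<beta>
    using red_struct.hyps(1,3) by (simp_all add: occ_scong)
  moreover have "sync a P"
    using \<open>sync a Q\<close> red_struct.hyps(1) by (blast intro: sync_scong scong.sc_sym)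
  ultimately show ?case by auto
qed

lemma names_remove_sync_name:
  assumes "\<And>\<beta>. occ \<beta> P = occ \<beta> P' + (if actname \<beta> = a then 1 else 0)"
  shows "names P = names P' \<union> {a}"
  using assms[of "In _"] assms[of "Out _"] by (auto simp: mem_names_iff_occ split: if_splits)

lemma sync_name_vanishes:
  assumes "linear P"
    and "\<And>\<beta>. occ \<beta> P = occ \<beta> P' + (if actname \<beta> = a then 1 else 0)"
  shows "a \<notin> names P'"
proof -
  have "occ (In a) P \<le> 1" "occ (Out a) P \<le> 1"
    using assms(1) by (simp_all add: linear_def)
  then show ?thesis
    using assms(2)[of "In a"] assms(2)[of "Out a"] by (simp add: mem_names_iff_occ)
qed

theorem lemma1:
  fixes P P' :: "'n proc"
  assumes "linear P" and "P \<longmapsto> P'"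
  shows "\<exists>a. a \<notin> names P' \<and> names P' \<union> {a} = names P \<and> sync a P"
proof -
  obtain a where occ: "\<And>\<beta>. occ \<beta> P = occ \<beta> P' + (if actname \<beta> = a then 1 else 0)"
    and "sync a P"
    using red_consumes_sync_pair[OF assms(2)] by blast
  then show ?thesis
    using sync_name_vanishes[OF assms(1) occ] names_remove_sync_name[OF occ] by blast
qed

end
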